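(* Let $\pi_n=\mathbb P(\Gamma\notin\mathcal T)$ for $\Gamma\in G(n,\tfrac12)$, let $f(n)=2n\sum_{i=0}^n\binom ni 2^{-n-\binom i2}$, let $t(n)$ be the number of graphs in $\mathcal T$ on the vertex set $\{1,\dots,n\}$, and let $c(n)$ be the total number of cliques (including the empty clique and single vertices) in all these $t(n)$ graphs. Then for every $n$: (1) $\pi_{2n}\le\pi_n^2+f(n)$; (2) $\pi_{2n}\le\pi_n^2+2\pi_n(1-\pi_n)\frac{n\,c(n)}{2^n t(n)}+(1-\pi_n)^2$; (3) $\pi_{n+1}\le\pi_n+f(n)$.
   Context: $G(n,p)$: random simplicial graphs on $n$ labelled vertices, each edge independently present with probability $p$. $\mathcal T$ is the smallest class of finite simplicial graphs containing $K_{2,2}$, closed under adding a new vertex adjacent exactly to the vertices of an induced subgraph which is not a clique, and closed under gluing two members along a common induced subgraph which is not a clique (optionally adding edges between vertices of the two non-shared parts). *)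

theory Defs
  imports Complex_Main
begin

definition is_graph :: "nat set \<Rightarrow> (nat \<times> nat) set \<Rightarrow> bool" where
  "is_graph V E \<longleftrightarrow> E \<subseteq> V \<times> V \<and> sym E \<and> irrefl E"

definition is_clique :: "(nat \<times> nat) set \<Rightarrow> nat set \<Rightarrow> bool" where
  "is_clique E S \<longleftrightarrow> (\<forall>x\<in>S. \<forall>y\<in>S. x \<noteq> y \<longrightarrow> (x, y) \<in> E)"

definition induced :: "(nat \<times> nat) set \<Rightarrow> nat set \<Rightarrow> (nat \<times> nat) set" where
  "induced E S = E \<inter> (S \<times> S)"

inductive inT :: "nat set \<Rightarrow> (nat \<times> nat) set \<Rightarrow> bool" where
  K22: "inT {0,1,2,3} {(0,2),(2,0),(0,3),(3,0),(1,2),(2,1),(1,3),(3,1)}"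
| iso: "\<lbrakk> inT V E; bij_betw f V V'; E' \<subseteq> V' \<times> V';
          \<forall>x\<in>V. \<forall>y\<in>V. ((x, y) \<in> E \<longleftrightarrow> (f x, f y) \<in> E') \<rbrakk> \<Longrightarrow> inT V' E'"
| cone: "\<lbrakk> inT V E; S \<subseteq> V; \<not> is_clique E S; v \<notin> V \<rbrakk> \<Longrightarrow>
          inT (insert v V) (E \<union> {(v, s) | s. s \<in> S} \<union> {(s, v) | s. s \<in> S})"
| glue: "\<lbrakk> inT V1 E1; inT V2 E2; induced E1 (V1 \<inter> V2) = induced E2 (V1 \<inter> V2);
          \<not> is_clique E1 (V1 \<inter> V2);
          F \<subseteq> (V1 - V2) \<times> (V2 - V1) \<rbrakk> \<Longrightarrow>
          inT (V1 \<union> V2) (E1 \<union> E2 \<union> F \<union> F\<inverse>)"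

text \<open>All labelled graphs on vertex set {1..n}; G(n,1/2) is the uniform distribution on them.\<close>
definition graphs_on :: "nat \<Rightarrow> (nat \<times> nat) set set" where
  "graphs_on n = {E. is_graph {1..n} E}"

definition piT :: "nat \<Rightarrow> real" where
  "piT n = real (card {E \<in> graphs_on n. \<not> inT {1..n} E}) / real (card (graphs_on n))"

definition fT :: "nat \<Rightarrow> real" where
  "fT n = 2 * real n * (\<Sum>i=0..n. real (n choose i) / 2 ^ (n + (i choose 2)))"

definition tT :: "nat \<Rightarrow> nat" where
  "tT n = card {E \<in> graphs_on n. inT {1..n} E}"

definition cT :: "nat \<Rightarrow> nat" where
  "cT n = (\<Sum>E\<in>{E \<in> graphs_on n. inT {1..n} E}. card {K. K \<subseteq> {1..n} \<and> is_clique E K})"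

end

theory Submission
  imports Defs
begin

(*
  Split the vertex set as A \<union> B with A, B disjoint. If Gamma[A] is in T but no vertex
  b of B has a clique as its neighbourhood in A, then the vertices of B can be added one
  at a time by cone operations over non-cliques, so Gamma is in T. Hence Gamma \<notin> T forces
  Gamma[A] \<notin> T, or a vertex of B whose neighbourhood in A is a clique; symmetrically
  for B. Gamma[A] and Gamma[B] are independent, and a fixed outside vertex has a clique
  as its neighbourhood in an n-vertex random graph with probability
  sum_i (n choose i) 2^(-n - (i choose 2)) = f(n) / 2n, so the union bound gives (1)
  and (3). For (2) one distinguishes whether Gamma[A] and Gamma[B] are in T; in the mixed
  case the vertex with a clique neighbourhood has to sit over a graph in T, which brings
  in the clique count c(n).
*)

section \<open>Uniform random graphs on a finite vertex set\<close>

definition graphs :: "nat set \<Rightarrow> (nat \<times> nat) set set" where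
  "graphs V = {E. is_graph V E}"

definition graph_prob :: "nat set \<Rightarrow> ((nat \<times> nat) set \<Rightarrow> bool) \<Rightarrow> real" where
  "graph_prob V P = real (card {E \<in> graphs V. P E}) / real (card (graphs V))"

lemma finite_graphs: "finite V \<Longrightarrow> finite (graphs V)"
  unfolding graphs_def is_graph_def by (rule finite_subset[of _ "Pow (V \<times> V)"]) auto

lemma empty_in_graphs: "{} \<in> graphs V"
  unfolding graphs_def is_graph_def sym_def irrefl_def by auto

lemma card_graphs_pos: "finite V \<Longrightarrow> card (graphs V) > 0"
  using finite_graphs empty_in_graphs by (metis card_gt_0_iff empty_iff)

lemma graphs_subset: "E \<in> graphs V \<Longrightarrow> E \<subseteq> V \<times> V"
  unfolding graphs_def is_graph_def by auto

lemma induced_graph: "E \<in> graphs V \<Longrightarrow> induced E V = E"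
  unfolding graphs_def is_graph_def induced_def by auto

lemma graphs_disjoint_union_bij:
  assumes "V \<inter> W = {}"
  shows "bij_betw (\<lambda>E. (induced E V, induced E W, E \<inter> V \<times> W))
           (graphs (V \<union> W)) (graphs V \<times> graphs W \<times> Pow (V \<times> W))"
  by (rule bij_betw_byWitness[where f' = "\<lambda>(E1, E2, H). E1 \<union> E2 \<union> H \<union> H\<inverse>"])
     (use assms in \<open>auto simp: graphs_def is_graph_def induced_def sym_def irrefl_def\<close>)

definition nbhd :: "(nat \<times> nat) set \<Rightarrow> nat set \<Rightarrow> nat \<Rightarrow> nat set" where
  "nbhd E A v = {a \<in> A. (v, a) \<in> E}"

lemma graphs_insert_bij:
  assumes "w \<notin> A"
  shows "bij_betw (\<lambda>E. (induced E A, nbhd E A w)) (graphs (insert w A)) (graphs A \<times> Pow A)"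
  by (rule bij_betw_byWitness[where f' = "\<lambda>(E0, N). E0 \<union> Pair w ` N \<union> (\<lambda>a. (a, w)) ` N"])
     (use assms in \<open>auto simp: graphs_def is_graph_def induced_def nbhd_def sym_def irrefl_def\<close>)

lemma card_graphs_insert:
  "finite A \<Longrightarrow> w \<notin> A \<Longrightarrow> card (graphs (insert w A)) = card (graphs A) * 2 ^ card A"
  using bij_betw_same_card[OF graphs_insert_bij] by (simp add: card_cartesian_product card_Pow)

lemma card_graphs: "finite V \<Longrightarrow> card (graphs V) = 2 ^ (card V choose 2)"
proof (induction V rule: finite_induct)
  case empty
  have "graphs {} = {{}}"
    unfolding graphs_def is_graph_def by auto
  then show ?case by (simp add: numeral_2_eq_2)
next
  case (insert w V)
  have "Suc (card V) choose 2 = card V + (card V choose 2)"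
    by (simp add: numeral_2_eq_2)
  with insert show ?case by (simp add: card_graphs_insert power_add)
qed

lemma graph_prob_cong: "(\<And>E. E \<in> graphs V \<Longrightarrow> P E = Q E) \<Longrightarrow> graph_prob V P = graph_prob V Q"
  unfolding graph_prob_def by (metis (mono_tags, lifting))

lemma graph_prob_mono:
  "finite V \<Longrightarrow> (\<And>E. E \<in> graphs V \<Longrightarrow> P E \<Longrightarrow> Q E) \<Longrightarrow> graph_prob V P \<le> graph_prob V Q"
  unfolding graph_prob_def by (intro divide_right_mono) (auto intro!: card_mono finite_graphs)

lemma graph_prob_disj_le:
  assumes "finite V"
  shows "graph_prob V (\<lambda>E. P E \<or> Q E) \<le> graph_prob V P + graph_prob V Q"
proof -
  have "{E \<in> graphs V. P E \<or> Q E} = {E \<in> graphs V. P E} \<union> {E \<in> graphs V. Q E}"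
    by auto
  then have "real (card {E \<in> graphs V. P E \<or> Q E})
      \<le> real (card {E \<in> graphs V. P E}) + real (card {E \<in> graphs V. Q E})"
    using card_Un_le[of "{E \<in> graphs V. P E}" "{E \<in> graphs V. Q E}"] by simp
  then show ?thesis
    unfolding graph_prob_def by (simp add: add_divide_distrib[symmetric] divide_right_mono)
qed

lemma graph_prob_Bex_le:
  assumes "finite V" "finite I"
  shows "graph_prob V (\<lambda>E. \<exists>i\<in>I. P i E) \<le> (\<Sum>i\<in>I. graph_prob V (P i))"
proof -
  have "{E \<in> graphs V. \<exists>i\<in>I. P i E} = (\<Union>i\<in>I. {E \<in> graphs V. P i E})"
    by auto
  then have "card {E \<in> graphs V. \<exists>i\<in>I. P i E} \<le> (\<Sum>i\<in>I. card {E \<in> graphs V. P i E})"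
    using card_UN_le[OF assms(2), of "\<lambda>i. {E \<in> graphs V. P i E}"] by simp
  then have "real (card {E \<in> graphs V. \<exists>i\<in>I. P i E}) \<le> (\<Sum>i\<in>I. real (card {E \<in> graphs V. P i E}))"
    by (simp only: of_nat_sum[symmetric] of_nat_le_iff)
  then show ?thesis
    unfolding graph_prob_def by (simp add: sum_divide_distrib[symmetric] divide_right_mono)
qed

lemma graph_prob_True: "finite V \<Longrightarrow> graph_prob V (\<lambda>E. True) = 1"
  unfolding graph_prob_def using card_graphs_pos by force

lemma graph_prob_le_1: "finite V \<Longrightarrow> graph_prob V P \<le> 1"
  using graph_prob_mono[of V P "\<lambda>E. True"] graph_prob_True by simp

lemma graph_prob_not: "finite V \<Longrightarrow> graph_prob V (\<lambda>E. \<not> P E) = 1 - graph_prob V P"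
proof -
  assume "finite V"
  have "{E \<in> graphs V. \<not> P E} \<union> {E \<in> graphs V. P E} = graphs V"
    by auto
  then have "card {E \<in> graphs V. \<not> P E} + card {E \<in> graphs V. P E} = card (graphs V)"
    using card_Un_disjoint finite_graphs[OF \<open>finite V\<close>]
    by (metis (no_types, lifting) disjoint_iff finite_Un mem_Collect_eq)
  then have "real (card {E \<in> graphs V. \<not> P E}) = real (card (graphs V)) - real (card {E \<in> graphs V. P E})"
    by linarith
  then show ?thesis
    unfolding graph_prob_def using card_graphs_pos[OF \<open>finite V\<close>] by (simp add: diff_divide_distrib)
qed

lemma graph_prob_indep:
  assumes fin: "finite V" "finite W" and disj: "V \<inter> W = {}"
    and Q: "\<And>E. E \<in> graphs (V \<union> W) \<Longrightarrow> Q (E - induced E V) = Q E"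
  shows "graph_prob (V \<union> W) (\<lambda>E. P (induced E V) \<and> Q E) = graph_prob V P * graph_prob (V \<union> W) Q"
proof -
  let ?split = "\<lambda>E. (induced E V, induced E W, E \<inter> V \<times> W)"
  let ?Q' = "\<lambda>(E2, H). Q (E2 \<union> H \<union> H\<inverse>)"
  let ?S = "{s \<in> graphs W \<times> Pow (V \<times> W). ?Q' s}"
  have Q': "Q E = ?Q' (snd (?split E))" if "E \<in> graphs (V \<union> W)" for E
  proof -
    have "E - induced E V = induced E W \<union> (E \<inter> V \<times> W) \<union> (E \<inter> V \<times> W)\<inverse>"
      using that disj unfolding graphs_def is_graph_def induced_def sym_def by auto
    then show ?thesis using Q[OF that] by simp
  qed
  have count: "card {E \<in> graphs (V \<union> W). R (induced E V) \<and> Q E} = card {E0 \<in> graphs V. R E0} * card ?S"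
    for R
  proof -
    have "bij_betw ?split {E \<in> graphs (V \<union> W). R (induced E V) \<and> Q E}
        {t \<in> graphs V \<times> graphs W \<times> Pow (V \<times> W). R (fst t) \<and> ?Q' (snd t)}"
      by (rule bij_betw_Collect[OF graphs_disjoint_union_bij[OF disj]]) (use Q' in auto)
    moreover have "{t \<in> graphs V \<times> graphs W \<times> Pow (V \<times> W). R (fst t) \<and> ?Q' (snd t)}
        = {E0 \<in> graphs V. R E0} \<times> ?S"
      by auto
    ultimately show ?thesis by (simp add: bij_betw_same_card card_cartesian_product)
  qed
  have "card (graphs (V \<union> W)) = card (graphs V) * card (graphs W \<times> Pow (V \<times> W))"
    using bij_betw_same_card[OF graphs_disjoint_union_bij[OF disj]] by (simp add: card_cartesian_product)
  with count[of P] count[of "\<lambda>_. True"] card_graphs_pos[OF fin(1)] show ?thesis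
    unfolding graph_prob_def by (simp add: field_simps)
qed

lemma graph_prob_induced:
  assumes "finite V" "S \<subseteq> V"
  shows "graph_prob V (\<lambda>E. P (induced E S)) = graph_prob S P"
proof -
  have "graph_prob (S \<union> (V - S)) (\<lambda>E. P (induced E S) \<and> True)
      = graph_prob S P * graph_prob (S \<union> (V - S)) (\<lambda>E. True)"
    by (rule graph_prob_indep) (use assms finite_subset in auto)
  moreover have "S \<union> (V - S) = V"
    using assms(2) by auto
  ultimately show ?thesis using graph_prob_True[OF assms(1)] by simp
qed

lemma graph_prob_induced_indep:
  assumes "finite A" "finite B" "A \<inter> B = {}"
  shows "graph_prob (A \<union> B) (\<lambda>E. P (induced E A) \<and> Q (induced E B)) = graph_prob A P * graph_prob B Q"
proof -
  have "induced (E - induced E A) B = induced E B" for E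
    using assms(3) unfolding induced_def by auto
  then have "graph_prob (A \<union> B) (\<lambda>E. P (induced E A) \<and> Q (induced E B))
      = graph_prob A P * graph_prob (A \<union> B) (\<lambda>E. Q (induced E B))"
    by (intro graph_prob_indep) (simp_all add: assms)
  also have "graph_prob (A \<union> B) (\<lambda>E. Q (induced E B)) = graph_prob B Q"
    by (rule graph_prob_induced) (use assms in auto)
  finally show ?thesis .
qed

section \<open>Clique neighbourhoods of an added vertex\<close>

definition cliques :: "(nat \<times> nat) set \<Rightarrow> nat set \<Rightarrow> nat set set" where
  "cliques E A = {K \<in> Pow A. is_clique E K}"

(* The neighbourhood of a new vertex is a given i-set with probability 2^-n,
   and that set is a clique with probability 2^-(i choose 2). *)
definition nbhd_clique_prob :: "nat \<Rightarrow> real" where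
  "nbhd_clique_prob n = (\<Sum>i=0..n. real (n choose i) / 2 ^ (n + (i choose 2)))"

lemma sum_Pow_card:
  fixes f :: "nat \<Rightarrow> 'a::comm_semiring_1"
  assumes "finite A"
  shows "(\<Sum>K\<in>Pow A. f (card K)) = (\<Sum>i=0..card A. of_nat (card A choose i) * f i)"
proof -
  have "(\<Sum>K\<in>Pow A. f (card K)) = (\<Sum>i=0..card A. \<Sum>K\<in>{K \<in> Pow A. card K = i}. f (card K))"
    by (rule sum.group[symmetric]) (use assms card_mono in auto)
  also have "\<dots> = (\<Sum>i=0..card A. of_nat (card {K \<in> Pow A. card K = i}) * f i)"
    by (intro sum.cong) auto
  also have "\<dots> = (\<Sum>i=0..card A. of_nat (card A choose i) * f i)"
    using n_subsets[OF assms] by (simp add: Pow_def)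
  finally show ?thesis .
qed

lemma is_clique_induced: "N \<subseteq> S \<Longrightarrow> is_clique (induced E S) N \<longleftrightarrow> is_clique E N"
  unfolding is_clique_def induced_def by auto

lemma nbhd_induced: "A \<subseteq> X \<Longrightarrow> v \<in> X \<Longrightarrow> nbhd (induced E X) A v = nbhd E A v"
  unfolding induced_def nbhd_def by auto

lemma induced_induced: "A \<subseteq> X \<Longrightarrow> induced (induced E X) A = induced E A"
  unfolding induced_def by auto

lemma card_graphs_clique:
  assumes "finite V" "K \<subseteq> V"
  shows "real (card {E \<in> graphs V. is_clique E K}) = real (card (graphs V)) / 2 ^ (card K choose 2)"
proof -
  have "{E \<in> graphs K. is_clique E K} = {{(x, y). x \<in> K \<and> y \<in> K \<and> x \<noteq> y}}"
    unfolding graphs_def is_graph_def is_clique_def sym_def irrefl_def by auto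
  then have "graph_prob K (\<lambda>E. is_clique E K) = 1 / 2 ^ (card K choose 2)"
    unfolding graph_prob_def using card_graphs[OF finite_subset[OF assms(2,1)]] by simp
  then have "graph_prob V (\<lambda>E. is_clique E K) = 1 / 2 ^ (card K choose 2)"
    using graph_prob_induced[OF assms, of "\<lambda>E. is_clique E K"] is_clique_induced[of K K] by simp
  then show ?thesis
    unfolding graph_prob_def using card_graphs_pos[OF assms(1)] by (simp add: field_simps)
qed

lemma card_graphs_insert_nbhd_clique:
  assumes "finite A" "w \<notin> A"
  shows "card {E \<in> graphs (insert w A). P (induced E A) \<and> is_clique E (nbhd E A w)}
       = (\<Sum>E0 \<in> {E0 \<in> graphs A. P E0}. card (cliques E0 A))"
proof -
  have "bij_betw (\<lambda>E. (induced E A, nbhd E A w))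
      {E \<in> graphs (insert w A). P (induced E A) \<and> is_clique E (nbhd E A w)}
      {t \<in> graphs A \<times> Pow A. P (fst t) \<and> is_clique (fst t) (snd t)}"
    by (rule bij_betw_Collect[OF graphs_insert_bij[OF assms(2)]])
       (auto simp: is_clique_induced nbhd_def)
  moreover have "{t \<in> graphs A \<times> Pow A. P (fst t) \<and> is_clique (fst t) (snd t)}
      = (SIGMA E0:{E0 \<in> graphs A. P E0}. cliques E0 A)"
    unfolding cliques_def by auto
  ultimately show ?thesis
    using assms(1) by (simp add: bij_betw_same_card finite_graphs cliques_def)
qed

lemma graph_prob_insert_nbhd_clique:
  assumes "finite A" "w \<notin> A"
  shows "graph_prob (insert w A) (\<lambda>E. is_clique E (nbhd E A w)) = nbhd_clique_prob (card A)"
proof -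
  have "card {E \<in> graphs (insert w A). is_clique E (nbhd E A w)} = (\<Sum>E0 \<in> graphs A. card (cliques E0 A))"
    using card_graphs_insert_nbhd_clique[OF assms, of "\<lambda>_. True"] by simp
  also have "\<dots> = (\<Sum>K \<in> Pow A. card {E0 \<in> graphs A. is_clique E0 K})"
    unfolding cliques_def by (rule sum_multicount_gen) (auto simp: assms finite_graphs)
  finally have "real (card {E \<in> graphs (insert w A). is_clique E (nbhd E A w)})
      = (\<Sum>K \<in> Pow A. real (card (graphs A)) / 2 ^ (card K choose 2))"
    by (simp add: card_graphs_clique assms(1))
  then have "graph_prob (insert w A) (\<lambda>E. is_clique E (nbhd E A w))
      = (\<Sum>K \<in> Pow A. 1 / 2 ^ (card A + (card K choose 2)))"
    unfolding graph_prob_def card_graphs_insert[OF assms] using card_graphs_pos[OF assms(1)]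
    by (simp add: sum_divide_distrib power_add mult.commute)
  also have "\<dots> = nbhd_clique_prob (card A)"
    unfolding nbhd_clique_prob_def
    using sum_Pow_card[OF assms(1), of "\<lambda>i. 1 / (2::real) ^ (card A + (i choose 2))"] by simp
  finally show ?thesis .
qed

lemma graph_prob_nbhd_clique:
  assumes "finite V" "A \<subseteq> V" "v \<in> V - A"
  shows "graph_prob V (\<lambda>E. is_clique E (nbhd E A v)) = nbhd_clique_prob (card A)"
proof -
  let ?X = "insert v A"
  have "is_clique E (nbhd E A v) \<longleftrightarrow> is_clique (induced E ?X) (nbhd (induced E ?X) A v)" for E
  proof -
    have "nbhd (induced E ?X) A v = nbhd E A v"
      by (rule nbhd_induced) auto
    moreover have "nbhd E A v \<subseteq> ?X"
      unfolding nbhd_def by auto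
    ultimately show ?thesis by (simp add: is_clique_induced)
  qed
  then have "graph_prob V (\<lambda>E. is_clique E (nbhd E A v)) = graph_prob ?X (\<lambda>E. is_clique E (nbhd E A v))"
    using graph_prob_induced[of V ?X "\<lambda>E. is_clique E (nbhd E A v)"] assms by simp
  also have "\<dots> = nbhd_clique_prob (card A)"
    using graph_prob_insert_nbhd_clique assms finite_subset by blast
  finally show ?thesis .
qed

section \<open>Relabelling vertices\<close>

definition relabel :: "(nat \<Rightarrow> nat) \<Rightarrow> (nat \<times> nat) set \<Rightarrow> (nat \<times> nat) set" where
  "relabel f E = map_prod f f ` E"

lemma relabel_mem_iff:
  assumes "inj_on f S" "E \<subseteq> S \<times> S" "x \<in> S" "y \<in> S"
  shows "(f x, f y) \<in> relabel f E \<longleftrightarrow> (x, y) \<in> E"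
proof
  assume "(f x, f y) \<in> relabel f E"
  then obtain u v where "(u, v) \<in> E" "f u = f x" "f v = f y"
    unfolding relabel_def by auto
  with assms show "(x, y) \<in> E"
    by (metis inj_onD mem_Sigma_iff subsetD)
qed (force simp: relabel_def)

lemma relabel_in_graphs: "bij_betw f S S' \<Longrightarrow> E \<in> graphs S \<Longrightarrow> relabel f E \<in> graphs S'"
  unfolding graphs_def is_graph_def relabel_def bij_betw_def inj_on_def sym_def irrefl_def by fastforce

lemma relabel_relabel_id:
  assumes "\<And>x. x \<in> S \<Longrightarrow> g (f x) = x" "E \<subseteq> S \<times> S"
  shows "relabel g (relabel f E) = E"
proof -
  have "map_prod g g (map_prod f f p) = p" if "p \<in> E" for p
    using that assms by auto
  then show ?thesis
    unfolding relabel_def image_image using image_cong[OF refl, of E] by (metis image_ident)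
qed

lemma relabel_inv_into:
  assumes "inj_on f S" "E \<subseteq> S \<times> S"
  shows "relabel (inv_into S f) (relabel f E) = E"
  using assms by (intro relabel_relabel_id[where S = S]) auto

lemma bij_betw_relabel:
  assumes "bij_betw f S S'"
  shows "bij_betw (relabel f) (graphs S) (graphs S')"
proof (rule bij_betw_byWitness[where f' = "relabel (inv_into S f)"])
  have inj: "inj_on f S" and img: "f ` S = S'"
    using assms by (auto simp: bij_betw_def)
  show "\<forall>E\<in>graphs S. relabel (inv_into S f) (relabel f E) = E"
    using relabel_inv_into[OF inj] graphs_subset by blast
  show "\<forall>E\<in>graphs S'. relabel f (relabel (inv_into S f) E) = E"
  proof
    fix E assume "E \<in> graphs S'"
    then show "relabel f (relabel (inv_into S f) E) = E"
      using img graphs_subset by (intro relabel_relabel_id[where S = S']) (auto simp: f_inv_into_f)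
  qed
  show "relabel f ` graphs S \<subseteq> graphs S'" "relabel (inv_into S f) ` graphs S' \<subseteq> graphs S"
    using relabel_in_graphs assms bij_betw_inv_into[OF assms] by blast+
qed

lemma inT_relabel:
  assumes "bij_betw f S S'" "E \<in> graphs S" "inT S E"
  shows "inT S' (relabel f E)"
proof (rule inT.iso[OF assms(3,1)])
  show "relabel f E \<subseteq> S' \<times> S'"
    using graphs_subset[OF relabel_in_graphs[OF assms(1,2)]] .
  show "\<forall>x\<in>S. \<forall>y\<in>S. (x, y) \<in> E \<longleftrightarrow> (f x, f y) \<in> relabel f E"
    using relabel_mem_iff[OF bij_betw_imp_inj_on[OF assms(1)] graphs_subset[OF assms(2)]] by simp
qed

lemma inT_relabel_iff:
  assumes "bij_betw f S S'" "E \<in> graphs S"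
  shows "inT S' (relabel f E) \<longleftrightarrow> inT S E"
proof
  have "relabel (inv_into S f) (relabel f E) = E"
    using relabel_inv_into[OF bij_betw_imp_inj_on[OF assms(1)] graphs_subset[OF assms(2)]] .
  then show "inT S' (relabel f E) \<Longrightarrow> inT S E"
    using inT_relabel[OF bij_betw_inv_into[OF assms(1)] relabel_in_graphs[OF assms]] by simp
qed (rule inT_relabel[OF assms])

lemma card_cliques_relabel:
  assumes "bij_betw f S S'" "E \<in> graphs S"
  shows "card (cliques (relabel f E) S') = card (cliques E S)"
proof -
  have inj: "inj_on f S"
    using assms(1) by (rule bij_betw_imp_inj_on)
  have "is_clique (relabel f E) (f ` K) \<longleftrightarrow> is_clique E K" if "K \<in> Pow S" for K
  proof -
    have "is_clique (relabel f E) (f ` K) \<longleftrightarrow> (\<forall>x\<in>K. \<forall>y\<in>K. f x \<noteq> f y \<longrightarrow> (f x, f y) \<in> relabel f E)"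
      unfolding is_clique_def by blast
    also have "\<dots> \<longleftrightarrow> is_clique E K"
      unfolding is_clique_def
    proof (intro ball_cong refl)
      fix x y assume "x \<in> K" "y \<in> K"
      with that have "x \<in> S" "y \<in> S"
        by auto
      then show "(f x \<noteq> f y \<longrightarrow> (f x, f y) \<in> relabel f E) \<longleftrightarrow> (x \<noteq> y \<longrightarrow> (x, y) \<in> E)"
        using inj_on_eq_iff[OF inj] relabel_mem_iff[OF inj graphs_subset[OF assms(2)]] by simp
    qed
    finally show ?thesis .
  qed
  then have "bij_betw (image f) (cliques E S) (cliques (relabel f E) S')"
    unfolding cliques_def by (intro bij_betw_Collect[OF bij_betw_Pow[OF assms(1)]])
  then show ?thesis by (simp add: bij_betw_same_card)
qed

lemma graph_prob_relabel:
  assumes "bij_betw f S S'"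
  shows "graph_prob S' P = graph_prob S (\<lambda>E. P (relabel f E))"
proof -
  have "bij_betw (relabel f) {E \<in> graphs S. P (relabel f E)} {E \<in> graphs S'. P E}"
    by (rule bij_betw_Collect[OF bij_betw_relabel[OF assms]]) simp
  then show ?thesis
    unfolding graph_prob_def using bij_betw_same_card[OF bij_betw_relabel[OF assms]]
    by (simp add: bij_betw_same_card)
qed

section \<open>Probabilities for graphs in T\<close>

lemma graph_prob_not_inT:
  assumes "finite V"
  shows "graph_prob V (\<lambda>E. \<not> inT V E) = piT (card V)"
proof -
  obtain f where f: "bij_betw f {1..card V} V"
    using ex_bij_betw_nat_finite_1[OF assms] by blast
  have "graph_prob V (\<lambda>E. \<not> inT V E) = graph_prob {1..card V} (\<lambda>E. \<not> inT V (relabel f E))"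
    by (rule graph_prob_relabel[OF f])
  also have "\<dots> = graph_prob {1..card V} (\<lambda>E. \<not> inT {1..card V} E)"
    by (rule graph_prob_cong) (simp add: inT_relabel_iff[OF f])
  finally show ?thesis
    unfolding piT_def graph_prob_def graphs_on_def graphs_def .
qed

lemma sum_card_cliques_inT:
  assumes "finite V"
  shows "(\<Sum>E \<in> {E \<in> graphs V. inT V E}. card (cliques E V)) = cT (card V)"
proof -
  obtain f where f: "bij_betw f {1..card V} V"
    using ex_bij_betw_nat_finite_1[OF assms] by blast
  have bij: "bij_betw (relabel f) {E \<in> graphs {1..card V}. inT {1..card V} E} {E \<in> graphs V. inT V E}"
    by (rule bij_betw_Collect[OF bij_betw_relabel[OF f]]) (simp add: inT_relabel_iff[OF f])
  have "(\<Sum>E \<in> {E \<in> graphs V. inT V E}. card (cliques E V))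
      = (\<Sum>E \<in> {E \<in> graphs {1..card V}. inT {1..card V} E}. card (cliques (relabel f E) V))"
    using sum.reindex_bij_betw[OF bij, of "\<lambda>E. card (cliques E V)"] by simp
  also have "\<dots> = (\<Sum>E \<in> {E \<in> graphs {1..card V}. inT {1..card V} E}. card (cliques E {1..card V}))"
    by (intro sum.cong refl) (simp add: card_cliques_relabel[OF f])
  finally show ?thesis
    unfolding cT_def graphs_on_def graphs_def cliques_def Pow_def by simp
qed

lemma real_tT: "real (tT n) = (1 - piT n) * 2 ^ (n choose 2)"
proof -
  have "piT n = 1 - graph_prob {1..n} (inT {1..n})"
    using graph_prob_not_inT[of "{1..n}"] graph_prob_not[of "{1..n}" "inT {1..n}"] by simp
  then show ?thesis
    unfolding graph_prob_def tT_def graphs_on_def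
    using card_graphs[of "{1..n}"] by (simp add: graphs_def)
qed

(* Each pair of a graph in T on n vertices and one of its cliques K contributes
   2^-(n choose 2) for the graph times 2^-n for K being the neighbourhood of a new vertex. *)
definition nbhd_clique_T_prob :: "nat \<Rightarrow> real" where
  "nbhd_clique_T_prob n = real (cT n) / (2 ^ (n choose 2) * 2 ^ n)"

lemma graph_prob_insert_inT_nbhd_clique:
  assumes "finite A" "w \<notin> A"
  shows "graph_prob (insert w A) (\<lambda>E. inT A (induced E A) \<and> is_clique E (nbhd E A w))
       = nbhd_clique_T_prob (card A)"
  unfolding graph_prob_def nbhd_clique_T_prob_def
  using card_graphs_insert_nbhd_clique[OF assms, of "inT A"] sum_card_cliques_inT[OF assms(1)]
    card_graphs_insert[OF assms] card_graphs[OF assms(1)]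
  by simp

lemma graph_prob_inT_nbhd_clique_not_inT:
  assumes fin: "finite A" "finite B" and disj: "A \<inter> B = {}" and b: "b \<in> B"
  shows "graph_prob (A \<union> B) (\<lambda>E. inT A (induced E A) \<and> is_clique E (nbhd E A b) \<and> \<not> inT B (induced E B))
       = nbhd_clique_T_prob (card A) * piT (card B)"
proof -
  let ?X = "insert b A"
  let ?P = "\<lambda>E. inT A (induced E A) \<and> is_clique E (nbhd E A b)"
  let ?Q = "\<lambda>E. \<not> inT B (induced E B)"
  have U: "A \<union> B = ?X \<union> (B - {b})"
    using b by auto
  have P: "?P (induced E ?X) \<longleftrightarrow> ?P E" for E
  proof -
    have "induced (induced E ?X) A = induced E A"
      by (rule induced_induced) blast
    moreover have "nbhd (induced E ?X) A b = nbhd E A b"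
      by (rule nbhd_induced) blast+
    moreover have "nbhd E A b \<subseteq> ?X"
      unfolding nbhd_def by auto
    ultimately show ?thesis by (simp add: is_clique_induced)
  qed
  \<comment> \<open>b is the only common vertex of insert b A and B, and there are no loops\<close>
  have Q: "?Q (E - induced E ?X) = ?Q E" if "E \<in> graphs (?X \<union> (B - {b}))" for E
  proof -
    have "induced (E - induced E ?X) B = induced E B"
      using that disj unfolding graphs_def is_graph_def induced_def irrefl_def by auto
    then show ?thesis by simp
  qed
  have "graph_prob (?X \<union> (B - {b})) (\<lambda>E. ?P (induced E ?X) \<and> ?Q E)
      = graph_prob ?X ?P * graph_prob (?X \<union> (B - {b})) ?Q"
    by (rule graph_prob_indep) (use fin disj Q in auto)
  moreover have "graph_prob ?X ?P = nbhd_clique_T_prob (card A)"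
    using graph_prob_insert_inT_nbhd_clique fin disj b by blast
  moreover have "graph_prob (A \<union> B) ?Q = piT (card B)"
    using graph_prob_induced[of "A \<union> B" B "\<lambda>E. \<not> inT B E"] graph_prob_not_inT[of B] fin by simp
  ultimately show ?thesis
    unfolding U[symmetric] P by simp
qed

section \<open>Extension by cones\<close>

lemma induced_insert_cone:
  assumes "sym E" "irrefl E"
  shows "induced E (insert c X) = induced E X \<union> {(c, s) | s. s \<in> nbhd E X c} \<union> {(s, c) | s. s \<in> nbhd E X c}"
  using assms unfolding induced_def nbhd_def sym_def irrefl_def by auto

lemma inT_extend_by_cones:
  assumes "finite C" "A \<inter> C = {}" "sym E" "irrefl E" "inT A (induced E A)"
    and "\<And>c. c \<in> C \<Longrightarrow> \<not> is_clique E (nbhd E A c)"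
  shows "inT (A \<union> C) (induced E (A \<union> C))"
  using assms
proof (induction C rule: finite_induct)
  case empty
  then show ?case by simp
next
  case (insert c C)
  let ?Y = "A \<union> C"
  have IH: "inT ?Y (induced E ?Y)"
    using insert by auto
  have "nbhd E A c \<subseteq> nbhd E ?Y c"
    unfolding nbhd_def by auto
  then have "\<not> is_clique E (nbhd E ?Y c)"
    using insert.prems(5)[of c] unfolding is_clique_def by blast
  then have "\<not> is_clique (induced E ?Y) (nbhd E ?Y c)"
    using is_clique_induced[of "nbhd E ?Y c" ?Y E] by (auto simp: nbhd_def)
  then have "inT (insert c ?Y) (induced E ?Y \<union> {(c, s) | s. s \<in> nbhd E ?Y c} \<union> {(s, c) | s. s \<in> nbhd E ?Y c})"
    by (intro inT.cone[OF IH]) (use insert in \<open>auto simp: nbhd_def\<close>)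
  then show ?case
    using induced_insert_cone[OF insert.prems(2,3)] by simp
qed

lemma clique_nbhd_if_not_inT:
  assumes "E \<in> graphs (A \<union> B)" "finite B" "A \<inter> B = {}" "inT A (induced E A)" "\<not> inT (A \<union> B) E"
  shows "\<exists>b\<in>B. is_clique E (nbhd E A b)"
proof (rule ccontr)
  assume "\<not> ?thesis"
  then have "inT (A \<union> B) (induced E (A \<union> B))"
    using assms by (intro inT_extend_by_cones) (auto simp: graphs_def is_graph_def)
  then show False
    using assms(5) induced_graph[OF assms(1)] by simp
qed

lemma inT_nonempty: "inT V E \<Longrightarrow> V \<noteq> {}"
  by (induction rule: inT.induct) (auto simp: bij_betw_def)

section \<open>Union bounds\<close>

lemma graph_prob_ex_nbhd_clique_le:
  assumes "finite A" "finite B" "A \<inter> B = {}"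
  shows "graph_prob (A \<union> B) (\<lambda>E. \<exists>b\<in>B. is_clique E (nbhd E A b)) \<le> card B * nbhd_clique_prob (card A)"
proof -
  have "graph_prob (A \<union> B) (\<lambda>E. \<exists>b\<in>B. is_clique E (nbhd E A b))
      \<le> (\<Sum>b\<in>B. graph_prob (A \<union> B) (\<lambda>E. is_clique E (nbhd E A b)))"
    using assms by (intro graph_prob_Bex_le) auto
  also have "\<dots> = (\<Sum>b\<in>B. nbhd_clique_prob (card A))"
    using assms by (intro sum.cong refl graph_prob_nbhd_clique) auto
  finally show ?thesis by simp
qed

lemma graph_prob_ex_inT_nbhd_clique_not_inT_le:
  assumes "finite A" "finite B" "A \<inter> B = {}"
  shows "graph_prob (A \<union> B)
      (\<lambda>E. \<exists>b\<in>B. inT A (induced E A) \<and> is_clique E (nbhd E A b) \<and> \<not> inT B (induced E B))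
    \<le> card B * nbhd_clique_T_prob (card A) * piT (card B)"
proof -
  have "graph_prob (A \<union> B)
      (\<lambda>E. \<exists>b\<in>B. inT A (induced E A) \<and> is_clique E (nbhd E A b) \<and> \<not> inT B (induced E B))
    \<le> (\<Sum>b\<in>B. graph_prob (A \<union> B)
      (\<lambda>E. inT A (induced E A) \<and> is_clique E (nbhd E A b) \<and> \<not> inT B (induced E B)))"
    using assms by (intro graph_prob_Bex_le) auto
  also have "\<dots> = (\<Sum>b\<in>B. nbhd_clique_T_prob (card A) * piT (card B))"
    using assms by (intro sum.cong refl graph_prob_inT_nbhd_clique_not_inT) auto
  finally show ?thesis by simp
qed

lemma graph_prob_induced_not_inT:
  assumes "finite V" "A \<subseteq> V"
  shows "graph_prob V (\<lambda>E. \<not> inT A (induced E A)) = piT (card A)"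
  using graph_prob_induced[OF assms, of "\<lambda>E. \<not> inT A E"] graph_prob_not_inT[OF finite_subset[OF assms(2,1)]]
  by simp

lemma not_inT_prob_le_one_sided:
  assumes "finite A" "finite B" "A \<inter> B = {}"
  shows "graph_prob (A \<union> B) (\<lambda>E. \<not> inT (A \<union> B) E) \<le> piT (card A) + card B * nbhd_clique_prob (card A)"
proof -
  let ?V = "A \<union> B"
  have "graph_prob ?V (\<lambda>E. \<not> inT ?V E)
      \<le> graph_prob ?V (\<lambda>E. \<not> inT A (induced E A) \<or> (\<exists>b\<in>B. is_clique E (nbhd E A b)))"
    using clique_nbhd_if_not_inT assms by (intro graph_prob_mono) auto
  also have "\<dots> \<le> graph_prob ?V (\<lambda>E. \<not> inT A (induced E A)) + graph_prob ?V (\<lambda>E. \<exists>b\<in>B. is_clique E (nbhd E A b))"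
    using assms by (intro graph_prob_disj_le) auto
  also have "\<dots> \<le> piT (card A) + card B * nbhd_clique_prob (card A)"
    using graph_prob_ex_nbhd_clique_le[OF assms] graph_prob_induced_not_inT[of ?V A] assms by simp
  finally show ?thesis .
qed

lemma not_inT_prob_le:
  assumes "finite A" "finite B" "A \<inter> B = {}"
  shows "graph_prob (A \<union> B) (\<lambda>E. \<not> inT (A \<union> B) E)
    \<le> piT (card A) * piT (card B) + card B * nbhd_clique_prob (card A) + card A * nbhd_clique_prob (card B)"
proof -
  let ?V = "A \<union> B"
  let ?neither = "\<lambda>E. \<not> inT A (induced E A) \<and> \<not> inT B (induced E B)"
  let ?CA = "\<lambda>E. \<exists>b\<in>B. is_clique E (nbhd E A b)"
  let ?CB = "\<lambda>E. \<exists>a\<in>A. is_clique E (nbhd E B a)"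
  have "graph_prob ?V (\<lambda>E. \<not> inT ?V E) \<le> graph_prob ?V (\<lambda>E. ?neither E \<or> ?CA E \<or> ?CB E)"
    using clique_nbhd_if_not_inT[of _ A B] clique_nbhd_if_not_inT[of _ B A] assms
    by (intro graph_prob_mono) (auto simp: Un_commute Int_commute)
  also have "\<dots> \<le> graph_prob ?V ?neither + (graph_prob ?V ?CA + graph_prob ?V ?CB)"
    using graph_prob_disj_le[of ?V ?neither "\<lambda>E. ?CA E \<or> ?CB E"] graph_prob_disj_le[of ?V ?CA ?CB] assms
    by simp
  also have "graph_prob ?V ?neither = piT (card A) * piT (card B)"
    using graph_prob_induced_indep[OF assms, of "\<lambda>E. \<not> inT A E" "\<lambda>E. \<not> inT B E"]
      graph_prob_not_inT assms by simp
  also have "graph_prob ?V ?CA \<le> card B * nbhd_clique_prob (card A)"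
    by (rule graph_prob_ex_nbhd_clique_le[OF assms])
  also have "graph_prob ?V ?CB \<le> card A * nbhd_clique_prob (card B)"
    using graph_prob_ex_nbhd_clique_le[of B A] assms by (simp add: Un_commute Int_commute)
  finally show ?thesis by simp
qed

lemma not_inT_prob_le_split_by_T:
  assumes "finite A" "finite B" "A \<inter> B = {}"
  shows "graph_prob (A \<union> B) (\<lambda>E. \<not> inT (A \<union> B) E)
    \<le> piT (card A) * piT (card B)
      + card B * nbhd_clique_T_prob (card A) * piT (card B)
      + card A * nbhd_clique_T_prob (card B) * piT (card A)
      + (1 - piT (card A)) * (1 - piT (card B))"
proof -
  let ?V = "A \<union> B"
  let ?TA = "\<lambda>E. inT A (induced E A)" and ?TB = "\<lambda>E. inT B (induced E B)"
  let ?neither = "\<lambda>E. \<not> ?TA E \<and> \<not> ?TB E" and ?both = "\<lambda>E. ?TA E \<and> ?TB E"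
  let ?XA = "\<lambda>E. \<exists>b\<in>B. ?TA E \<and> is_clique E (nbhd E A b) \<and> \<not> ?TB E"
  let ?XB = "\<lambda>E. \<exists>a\<in>A. ?TB E \<and> is_clique E (nbhd E B a) \<and> \<not> ?TA E"
  have "graph_prob ?V (\<lambda>E. \<not> inT ?V E) \<le> graph_prob ?V (\<lambda>E. ?neither E \<or> ?XA E \<or> ?XB E \<or> ?both E)"
    using clique_nbhd_if_not_inT[of _ A B] clique_nbhd_if_not_inT[of _ B A] assms
    by (intro graph_prob_mono) (auto simp: Un_commute Int_commute)
  also have "\<dots> \<le> graph_prob ?V ?neither + (graph_prob ?V ?XA + (graph_prob ?V ?XB + graph_prob ?V ?both))"
    using graph_prob_disj_le[of ?V ?neither "\<lambda>E. ?XA E \<or> ?XB E \<or> ?both E"]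
      graph_prob_disj_le[of ?V ?XA "\<lambda>E. ?XB E \<or> ?both E"] graph_prob_disj_le[of ?V ?XB ?both] assms
    by simp
  also have "graph_prob ?V ?neither = piT (card A) * piT (card B)"
    using graph_prob_induced_indep[OF assms, of "\<lambda>E. \<not> inT A E" "\<lambda>E. \<not> inT B E"]
      graph_prob_not_inT assms by simp
  also have "graph_prob ?V ?both = (1 - piT (card A)) * (1 - piT (card B))"
    using graph_prob_induced_indep[OF assms, of "inT A" "inT B"]
      graph_prob_not[of A "inT A"] graph_prob_not[of B "inT B"] graph_prob_not_inT assms by simp
  also have "graph_prob ?V ?XA \<le> card B * nbhd_clique_T_prob (card A) * piT (card B)"
    by (rule graph_prob_ex_inT_nbhd_clique_not_inT_le[OF assms])
  also have "graph_prob ?V ?XB \<le> card A * nbhd_clique_T_prob (card B) * piT (card A)"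
    using graph_prob_ex_inT_nbhd_clique_not_inT_le[of B A] assms by (simp add: Un_commute Int_commute)
  finally show ?thesis by simp
qed

lemma piT_add_eq:
  "piT (m + n) = graph_prob ({1..m} \<union> {m+1..m+n}) (\<lambda>E. \<not> inT ({1..m} \<union> {m+1..m+n}) E)"
proof -
  have "{1..m} \<union> {m+1..m+n} = {1..m+n}"
    by auto
  then show ?thesis using graph_prob_not_inT[of "{1..m+n}"] by simp
qed

lemma piT_add_le_one_sided: "piT (m + n) \<le> piT m + n * nbhd_clique_prob m"
  using not_inT_prob_le_one_sided[of "{1..m}" "{m+1..m+n}"] by (simp add: piT_add_eq)

lemma piT_add_le: "piT (m + n) \<le> piT m * piT n + n * nbhd_clique_prob m + m * nbhd_clique_prob n"
  using not_inT_prob_le[of "{1..m}" "{m+1..m+n}"] by (simp add: piT_add_eq)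

lemma piT_add_le_split_by_T:
  "piT (m + n) \<le> piT m * piT n + n * nbhd_clique_T_prob m * piT n + m * nbhd_clique_T_prob n * piT m
      + (1 - piT m) * (1 - piT n)"
  using not_inT_prob_le_split_by_T[of "{1..m}" "{m+1..m+n}"] by (simp add: piT_add_eq)

lemma piT_0: "piT 0 = 1"
proof -
  have "graph_prob {} (\<lambda>E. \<not> inT {} E) = graph_prob {} (\<lambda>E. True)"
    using inT_nonempty by (intro graph_prob_cong) blast
  then show ?thesis
    using graph_prob_not_inT[of "{}"] graph_prob_True[of "{}"] by simp
qed

lemma piT_le_1: "piT n \<le> 1"
  using graph_prob_le_1[of "{1..n}" "\<lambda>E. \<not> inT {1..n} E"] graph_prob_not_inT[of "{1..n}"] by simp

lemma fT_eq: "fT n = 2 * real n * nbhd_clique_prob n"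
  unfolding fT_def nbhd_clique_prob_def ..

lemma nbhd_clique_prob_nonneg: "nbhd_clique_prob n \<ge> 0"
  unfolding nbhd_clique_prob_def by (intro sum_nonneg) simp

(* If tT n = 0 then also cT n = 0, and the right-hand side vanishes by division by zero. *)
lemma nbhd_clique_T_prob_eq: "nbhd_clique_T_prob n = (1 - piT n) * (real (cT n) / (2 ^ n * real (tT n)))"
proof (cases "tT n = 0")
  case True
  then have no_T: "{E \<in> graphs_on n. inT {1..n} E} = {}"
    using finite_graphs[of "{1..n}"] unfolding tT_def graphs_on_def graphs_def by simp
  then have "cT n = 0"
    unfolding cT_def by (simp only: no_T sum.empty)
  then show ?thesis
    unfolding nbhd_clique_T_prob_def by simp
next
  case False
  then have "1 - piT n \<noteq> 0"
    using real_tT[of n] by auto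
  then show ?thesis
    unfolding nbhd_clique_T_prob_def real_tT by (simp add: field_simps)
qed

theorem lemma3p11:
  fixes n :: nat
  shows "piT (2*n) \<le> (piT n)^2 + fT n
    \<and> piT (2*n) \<le> (piT n)^2
           + 2 * piT n * (1 - piT n) * (real n * real (cT n) / (2^n * real (tT n)))
           + (1 - piT n)^2
    \<and> piT (n+1) \<le> piT n + fT n"
proof (intro conjI)
  have double: "2 * n = n + n"
    by simp
  show "piT (2*n) \<le> (piT n)^2 + fT n"
    using piT_add_le[of n n] unfolding double fT_eq power2_eq_square by linarith
  have "real n * nbhd_clique_T_prob n * piT n
      = piT n * (1 - piT n) * (real n * real (cT n) / (2^n * real (tT n)))"
    unfolding nbhd_clique_T_prob_eq times_divide_eq_right[symmetric] by (simp only: mult_ac)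
  then show "piT (2*n) \<le> (piT n)^2
           + 2 * piT n * (1 - piT n) * (real n * real (cT n) / (2^n * real (tT n)))
           + (1 - piT n)^2"
    using piT_add_le_split_by_T[of n n] unfolding double power2_eq_square by linarith
  show "piT (n+1) \<le> piT n + fT n"
  proof (cases "n = 0")
    case True
    then show ?thesis
      using piT_le_1[of 1] by (simp add: piT_0 fT_eq)
  next
    case False
    then have "1 * nbhd_clique_prob n \<le> fT n"
      unfolding fT_eq by (intro mult_right_mono nbhd_clique_prob_nonneg) simp
    then show ?thesis
      using piT_add_le_one_sided[of n 1] by simp
  qed
qed

end
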